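(* Every universal totally positive diagonal quadratic form over $\mathcal{O}_K$ has at least $M_D/s$ variables if $s$ is even and at least $M_D/(2s)$ variables if $s$ is odd.
   Context: $D>1$ squarefree, $K=\mathbb{Q}(\sqrt D)$, $\mathcal{O}_K$ its ring of integers. A totally positive diagonal form is $a_1x_1^2+\dots+a_mx_m^2$ with $a_i\in\mathcal{O}_K$ totally positive (positive together with their conjugates); it is universal if it represents every totally positive element of $\mathcal{O}_K$ with $x_i\in\mathcal{O}_K$. $\omega_D=\sqrt D$ if $D\equiv2,3\pmod4$, $\omega_D=\frac{1+\sqrt D}2$ if $D\equiv1\pmod4$, with continued fraction $\omega_D=[u_0;\overline{u_1,\dots,u_s}]$, $s$ minimal period. $M_D=u_1+u_3+\dots+u_{s-1}$ if $s$ is even; $M_D=2u_0+u_1+\dots+u_{s-1}$ if $s$ odd and $D\equiv2,3\pmod4$; $M_D=2u_0+u_1+\dots+u_{s-1}-1$ if $s$ odd and $D\equiv1\pmod4$. *)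

theory Defs
  imports Complex_Main "HOL-Computational_Algebra.Squarefree"
begin

definition omega :: "nat \<Rightarrow> real" where
  "omega D = (if D mod 4 = 1 then (1 + sqrt (real D)) / 2 else sqrt (real D))"

definition omega_conj :: "nat \<Rightarrow> real" where
  "omega_conj D = (if D mod 4 = 1 then (1 - sqrt (real D)) / 2 else - sqrt (real D))"

definition OK :: "nat \<Rightarrow> real set" where
  "OK D = {of_int a + of_int b * omega D | a b. True}"

text \<open>Totally positive element of O_K: it and its conjugate are positive
  (the representation a + b omega is unique since sqrt D is irrational).\<close>
definition totally_positive :: "nat \<Rightarrow> real \<Rightarrow> bool" where
  "totally_positive D x \<longleftrightarrow> (\<exists>a b::int. x = of_int a + of_int b * omega D
       \<and> of_int a + of_int b * omega D > 0 \<and> of_int a + of_int b * omega_conj D > 0)"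

definition universal_diag_form :: "nat \<Rightarrow> nat \<Rightarrow> (nat \<Rightarrow> real) \<Rightarrow> bool" where
  "universal_diag_form D m a \<longleftrightarrow>
     (\<forall>i<m. a i \<in> OK D \<and> totally_positive D (a i)) \<and>
     (\<forall>\<alpha>. \<alpha> \<in> OK D \<and> totally_positive D \<alpha> \<longrightarrow>
        (\<exists>x :: nat \<Rightarrow> real. (\<forall>i<m. x i \<in> OK D) \<and> \<alpha> = (\<Sum>i<m. a i * (x i)\<^sup>2)))"

fun cf_rem :: "real \<Rightarrow> nat \<Rightarrow> real" where
  "cf_rem x 0 = x"
| "cf_rem x (Suc n) = 1 / frac (cf_rem x n)"

definition cf :: "real \<Rightarrow> nat \<Rightarrow> int" where
  "cf x n = \<lfloor>cf_rem x n\<rfloor>"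

definition u :: "nat \<Rightarrow> nat \<Rightarrow> int" where
  "u D n = cf (omega D) n"

definition period :: "nat \<Rightarrow> nat" where
  "period D = (LEAST s. s > 0 \<and> (\<forall>n\<ge>1. u D (n + s) = u D n))"

definition M :: "nat \<Rightarrow> int" where
  "M D = (let s = period D in
     if even s then (\<Sum>j<s div 2. u D (2 * j + 1))
     else if D mod 4 = 1 then 2 * u D 0 + (\<Sum>i\<in>{1..<s}. u D i) - 1
     else 2 * u D 0 + (\<Sum>i\<in>{1..<s}. u D i))"

end

theory Submission
  imports Defs
begin

text \<open>
  Let \<open>p\<^sub>k/q\<^sub>k\<close> be the convergents of \<open>\<omega>\<close> and \<open>\<alpha>\<^sub>k = p\<^sub>k - q\<^sub>k\<omega>'\<close>. For odd \<open>k\<close>,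
  \<open>\<alpha>\<^sub>k\<close> and \<open>\<alpha>\<^sub>k\<^sub>+\<^sub>1\<close> form a \<open>\<int>\<close>-basis of \<open>O\<^sub>K\<close>, \<open>\<alpha>\<^sub>k\<close> is totally positive and \<open>\<alpha>\<^sub>k\<^sub>+\<^sub>1\<close> has a
  negative conjugate, so the \<open>u\<^sub>k\<^sub>+\<^sub>2 + 1\<close> totally positive elements \<open>\<alpha>\<^sub>k + y \<alpha>\<^sub>k\<^sub>+\<^sub>1\<close>
  (\<open>0 \<le> y \<le> u\<^sub>k\<^sub>+\<^sub>2\<close>) have first coordinate \<open>1\<close> and are therefore indecomposable. A
  universal diagonal form must represent each of them by a single term \<open>a\<^sub>j x\<^sup>2\<close>, and one
  coefficient \<open>a\<^sub>j\<close> serves at most two of them: if \<open>a\<^sub>j x\<^sup>2\<close> and \<open>a\<^sub>j v\<^sup>2\<close> are on the list,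
  their product is a square, which pins down \<open>y + y'\<close>. Hence \<open>u\<^sub>n + 1 \<le> 2m\<close> for every
  odd \<open>n\<close>; summing over a period gives the bound for even \<open>s\<close>. For odd \<open>s\<close> every index is
  odd modulo \<open>s\<close>, and \<open>u\<^sub>s = 2u\<^sub>0 - tr \<omega>\<close> by the purely periodic expansion of \<open>u\<^sub>0 - \<omega>'\<close>.
\<close>

lemma sqrt_squarefree_irrational:
  assumes "D > 1" "squarefree D"
  shows "sqrt (real D) \<notin> \<rat>"
proof
  assume "sqrt (real D) \<in> \<rat>"
  then obtain p n :: nat where n: "n \<noteq> 0" and sq: "\<bar>sqrt (real D)\<bar> = p / n" and "coprime p n"
    by (rule Rats_abs_nat_div_natE)
  have "real p = sqrt (real D) * n" using n sq by (simp add: field_simps)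
  then have "real (p^2) = real (D * n^2)" by (simp add: power_mult_distrib)
  then have eq: "p^2 = D * n^2" by (simp only: of_nat_eq_iff)
  have "coprime (n^2) (p^2)" using \<open>coprime p n\<close> by (simp add: coprime_commute)
  moreover have "n^2 dvd p^2" using eq by simp
  ultimately have "n^2 dvd 1" using coprime_common_divisor[of "n^2" "p^2" "n^2"] by simp
  then have "n = 1" by simp
  with eq have "p^2 = D" by simp
  then have "p = 1" using assms(2) squarefreeD[of D p] by simp
  with \<open>p^2 = D\<close> assms(1) show False by simp
qed

lemma int_combination_eq_0_iff:
  fixes z :: real
  assumes "z \<notin> \<rat>"
  shows "of_int a + of_int b * z = 0 \<longleftrightarrow> a = 0 \<and> b = 0"
proof
  assume h: "of_int a + of_int b * z = 0"
  have "b = 0"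
  proof (rule ccontr)
    assume "b \<noteq> 0"
    from h have "of_int b * z = - of_int a" by linarith
    with \<open>b \<noteq> 0\<close> have "z = - of_int a / of_int b" by (simp add: field_simps)
    with assms show False by simp
  qed
  with h show "a = 0 \<and> b = 0" by simp
qed simp

lemma sum_pm_twice_sqrt_pos:
  fixes p q h :: real
  assumes "p > 0" "q > 0" "p \<noteq> q" "h * h = p * q"
  shows "p + q - 2 * h > 0" "p + q + 2 * h > 0"
proof -
  have "(p + q - 2 * h) * (p + q + 2 * h) = (p - q)^2"
    using assms(4) by (simp add: algebra_simps power2_eq_square)
  also have "\<dots> > 0" using assms(3) by simp
  finally show "p + q - 2 * h > 0" "p + q + 2 * h > 0"
    using assms(1,2) by (auto simp: zero_less_mult_iff)
qed

lemma sum_of_common_roots: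
  fixes r r' y y' c :: real
  assumes "(r + y) * (r + y') = c" "(r' + y) * (r' + y') = c" "r \<noteq> r'"
  shows "y + y' = - (r + r')"
proof -
  have "(r - r') * (r + r' + y + y') = 0" using assms(1,2) by (simp add: algebra_simps)
  with assms(3) show ?thesis by simp
qed

lemma card_le_2_if_pairwise_sums_eq:
  fixes A :: "'a::cancel_ab_semigroup_add set"
  assumes "\<And>x y. x \<in> A \<Longrightarrow> y \<in> A \<Longrightarrow> x \<noteq> y \<Longrightarrow> x + y = c"
  shows "card A \<le> 2"
proof (cases "finite A \<and> A \<noteq> {}")
  case True
  then obtain x0 where x0: "x0 \<in> A" by blast
  have "\<forall>x\<in>A - {x0}. \<forall>y\<in>A - {x0}. x = y"
    using assms x0 by (metis DiffE add_right_imp_eq singletonI)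
  then have "card (A - {x0}) \<le> 1" using True by (simp add: card_le_Suc0_iff_eq)
  then show ?thesis using x0 True by (simp add: card_Diff_singleton)
qed auto

lemma funpow_returns_if_inj_on_finite:
  assumes "finite A" "f ` A \<subseteq> A" "inj_on f A" "x \<in> A"
  obtains T where "T > 0" "(f ^^ T) x = x"
proof -
  have in_A: "(f ^^ n) y \<in> A" if "y \<in> A" for n y
    using that assms(2) by (induction n) auto
  have cancel: "y = z" if "(f ^^ n) y = (f ^^ n) z" "y \<in> A" "z \<in> A" for n y z
    using that by (induction n) (auto dest: inj_onD[OF assms(3)] simp: in_A)
  have "range (\<lambda>n. (f ^^ n) x) \<subseteq> A" using in_A assms(4) by auto
  then have "\<not> inj (\<lambda>n. (f ^^ n) x)"
    using assms(1) finite_subset finite_imageD infinite_UNIV_nat by blast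
  then obtain i j where "i < j" "(f ^^ i) x = (f ^^ j) x"
    unfolding inj_def by (metis linorder_neqE_nat)
  then have "(f ^^ i) ((f ^^ (j - i)) x) = (f ^^ i) x"
    by (simp flip: funpow_add comp_apply[of "f ^^ i"])
  then have "(f ^^ (j - i)) x = x" using cancel in_A assms(4) by blast
  with \<open>i < j\<close> show ?thesis by (intro that[of "j - i"]) simp_all
qed

lemma periodic_add_mult:
  fixes f :: "nat \<Rightarrow> 'a" and s n k :: nat
  assumes "\<forall>n\<ge>1. f (n + s) = f n" "n \<ge> 1"
  shows "f (n + k * s) = f n"
proof (induction k)
  case (Suc k)
  have "f (n + Suc k * s) = f ((n + k * s) + s)" by (simp add: algebra_simps)
  also have "\<dots> = f (n + k * s)" using assms by simp
  finally show ?case using Suc by simp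
qed simp

lemma least_period_dvd:
  fixes f :: "nat \<Rightarrow> 'a"
  assumes "T > 0" "\<forall>n\<ge>1. f (n + T) = f n"
  defines "s \<equiv> LEAST s. s > 0 \<and> (\<forall>n\<ge>1. f (n + s) = f n)"
  shows "s > 0" "\<forall>n\<ge>1. f (n + s) = f n" "s dvd T"
proof -
  let ?per = "\<lambda>s. s > 0 \<and> (\<forall>n\<ge>1. f (n + s) = f n)"
  have "?per s" unfolding s_def by (rule LeastI[of ?per T]) (use assms in simp)
  then show "s > 0" and per: "\<forall>n\<ge>1. f (n + s) = f n" by auto
  have "?per (T mod s)" if "T mod s \<noteq> 0"
  proof (intro conjI allI impI)
    fix n :: nat assume "n \<ge> 1"
    have "f (n + T mod s) = f (n + T mod s + T div s * s)"
      using periodic_add_mult[OF per, of "n + T mod s" "T div s"] \<open>n \<ge> 1\<close> by simp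
    also have "\<dots> = f (n + T)" by (simp add: add.assoc)
    also have "\<dots> = f n" using assms(2) \<open>n \<ge> 1\<close> by simp
    finally show "f (n + T mod s) = f n" .
  qed (use that in simp)
  moreover have "T mod s < s" using \<open>s > 0\<close> by simp
  ultimately show "s dvd T" using not_less_Least[of "T mod s" ?per] unfolding s_def
    by (auto simp: dvd_eq_mod_eq_0)
qed

section \<open>Continued fractions\<close>

declare cf_rem.simps(2) [simp del]

lemma cf_rem_Suc_eq: "cf_rem x (Suc n) = 1 / (cf_rem x n - of_int (cf x n))"
  by (simp add: cf_rem.simps(2) cf_def frac_def)

lemma cf_rem_irrational: "x \<notin> \<rat> \<Longrightarrow> cf_rem x n \<notin> \<rat>"
proof (induction n)
  case (Suc n)
  show ?case
  proof
    assume "cf_rem x (Suc n) \<in> \<rat>"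
    then have "1 / cf_rem x (Suc n) \<in> \<rat>" by simp
    then have "frac (cf_rem x n) + of_int \<lfloor>cf_rem x n\<rfloor> \<in> \<rat>" by (simp add: cf_rem.simps(2))
    then show False using Suc by (simp add: frac_def)
  qed
qed simp

lemma cf_rem_Suc_gt_1:
  assumes "x \<notin> \<rat>"
  shows "cf_rem x (Suc n) > 1"
proof -
  have "cf_rem x n \<notin> \<int>" using cf_rem_irrational[OF assms] Ints_subset_Rats by blast
  then have "0 < frac (cf_rem x n)" "frac (cf_rem x n) < 1" by (simp_all add: frac_lt_1)
  then show ?thesis by (simp add: cf_rem.simps(2))
qed

lemma cf_Suc_pos: "x \<notin> \<rat> \<Longrightarrow> cf x (Suc n) \<ge> 1"
  using cf_rem_Suc_gt_1 by (simp add: cf_def le_floor_iff less_imp_le)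

lemma cf_less_cf_rem:
  assumes "x \<notin> \<rat>"
  shows "of_int (cf x n) < cf_rem x n"
proof -
  have "cf_rem x n \<noteq> of_int (cf x n)" using cf_rem_irrational[OF assms] by (metis Rats_of_int)
  moreover have "of_int (cf x n) \<le> cf_rem x n" by (simp add: cf_def)
  ultimately show ?thesis by simp
qed

lemma cf_rem_add_of_int: "cf_rem (x + of_int k) (Suc n) = cf_rem x (Suc n)"
  by (induction n) (simp_all add: cf_rem.simps(2))

text \<open>Shifted indexing: \<open>conv_num D k / conv_den D k\<close> is the convergent
  \<open>p\<^sub>k\<^sub>-\<^sub>1/q\<^sub>k\<^sub>-\<^sub>1\<close> of \<open>omega D\<close>, starting from \<open>p\<^sub>-\<^sub>1/q\<^sub>-\<^sub>1 = 1/0\<close>.\<close>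

fun conv_num :: "nat \<Rightarrow> nat \<Rightarrow> int" where
  "conv_num D 0 = 1"
| "conv_num D (Suc 0) = u D 0"
| "conv_num D (Suc (Suc k)) = u D (Suc k) * conv_num D (Suc k) + conv_num D k"

fun conv_den :: "nat \<Rightarrow> nat \<Rightarrow> int" where
  "conv_den D 0 = 0"
| "conv_den D (Suc 0) = 1"
| "conv_den D (Suc (Suc k)) = u D (Suc k) * conv_den D (Suc k) + conv_den D k"

lemma conv_det: "conv_num D k * conv_den D (Suc k) - conv_num D (Suc k) * conv_den D k = (-1)^k"
proof (induction k)
  case (Suc k)
  have "conv_num D (Suc k) * conv_den D (Suc (Suc k)) - conv_num D (Suc (Suc k)) * conv_den D (Suc k)
      = - (conv_num D k * conv_den D (Suc k) - conv_num D (Suc k) * conv_den D k)"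
    by (simp add: algebra_simps)
  with Suc show ?case by simp
qed simp

section \<open>The ring of integers and its conjugation\<close>

definition omega_trace :: "nat \<Rightarrow> int" where
  "omega_trace D = (if D mod 4 = 1 then 1 else 0)"

definition omega_norm :: "nat \<Rightarrow> int" where
  "omega_norm D = (if D mod 4 = 1 then (1 - int D) div 4 else - int D)"

lemma omega_conj_eq: "omega_conj D = of_int (omega_trace D) - omega D"
  by (simp add: omega_def omega_conj_def omega_trace_def field_simps)

lemma omega_roots:
  "(omega D)^2 = of_int (omega_trace D) * omega D - of_int (omega_norm D)"
  "(omega_conj D)^2 = of_int (omega_trace D) * omega_conj D - of_int (omega_norm D)"
proof -
  have "real_of_int (omega_norm D) = (if D mod 4 = 1 then (1 - real D) / 4 else - real D)"
  proof (cases "D mod 4 = 1")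
    case True
    then have "4 dvd (1 - int D)" by presburger
    then show ?thesis using True by (auto simp: omega_norm_def real_of_int_div)
  qed (simp add: omega_norm_def)
  then show "(omega D)^2 = of_int (omega_trace D) * omega D - of_int (omega_norm D)"
    "(omega_conj D)^2 = of_int (omega_trace D) * omega_conj D - of_int (omega_norm D)"
    by (auto simp: omega_def omega_conj_def omega_trace_def power2_eq_square field_simps)
qed

lemma times_root_expand:
  fixes z :: real
  assumes "z^2 = of_int t * z - of_int n"
  shows "(of_int a + of_int b * z) * (of_int c + of_int d * z) =
    of_int (a * c - b * d * n) + of_int (a * d + b * c + b * d * t) * z"
proof -
  have "(of_int a + of_int b * z) * (of_int c + of_int d * z) =
      of_int (a * c) + of_int (a * d + b * c) * z + of_int (b * d) * z^2"
    by (simp add: algebra_simps power2_eq_square)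
  then show ?thesis using assms by (simp add: algebra_simps)
qed

lemma omega_gt_1:
  assumes "D > 1"
  shows "omega D > 1"
proof -
  have "D mod 4 = 1 \<Longrightarrow> (2::real)^2 < real D" using assms by simp presburger
  then have "D mod 4 = 1 \<Longrightarrow> sqrt (real D) > 2" using real_less_rsqrt by blast
  then show ?thesis using assms by (auto simp: omega_def)
qed

lemma omega_conj_neg: "D > 1 \<Longrightarrow> omega_conj D < 0"
  by (simp add: omega_conj_def)

locale real_quadratic_field =
  fixes D :: nat
  assumes D_gt_1: "D > 1" and squarefree_D: "squarefree D"
begin

abbreviation "w \<equiv> omega D"
abbreviation "w' \<equiv> omega_conj D"

lemma omega_irrational: "w \<notin> \<rat>"
proof
  assume "w \<in> \<rat>"
  moreover have "sqrt (real D) = (if D mod 4 = 1 then 2 * w - 1 else w)"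
    by (simp add: omega_def field_simps)
  ultimately have "sqrt (real D) \<in> \<rat>" by auto
  with sqrt_squarefree_irrational[OF D_gt_1 squarefree_D] show False by simp
qed

lemma omega_conj_irrational: "w' \<notin> \<rat>"
proof
  assume "w' \<in> \<rat>"
  then have "of_int (omega_trace D) - w' \<in> \<rat>" by simp
  with omega_irrational show False by (simp add: omega_conj_eq)
qed

lemma omega_coords_unique:
  assumes "of_int a + of_int b * w = of_int c + of_int d * w"
  shows "a = c \<and> b = d"
  using int_combination_eq_0_iff[OF omega_irrational, of "a - c" "b - d"] assms
  by (simp add: algebra_simps)

lemma OK_iff: "x \<in> OK D \<longleftrightarrow> (\<exists>a b. x = of_int a + of_int b * w)"
  by (auto simp: OK_def)

lemma OKE:
  assumes "x \<in> OK D"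
  obtains a b where "x = of_int a + of_int b * w"
  using assms by (auto simp: OK_def)

lemma OK_of_int [simp]: "of_int k \<in> OK D"
  unfolding OK_iff by (rule exI[of _ k], rule exI[of _ 0]) simp

lemma OK_numeral [simp]: "numeral n \<in> OK D" "0 \<in> OK D" "1 \<in> OK D"
  using OK_of_int[of "numeral n"] OK_of_int[of 0] OK_of_int[of 1] by simp_all

lemma OK_of_nat [simp]: "of_nat n \<in> OK D"
  using OK_of_int[of "int n"] by simp

lemma OK_add [simp]: "x \<in> OK D \<Longrightarrow> y \<in> OK D \<Longrightarrow> x + y \<in> OK D"
proof -
  assume "x \<in> OK D" "y \<in> OK D"
  then obtain a b c d where "x = of_int a + of_int b * w" "y = of_int c + of_int d * w"
    by (meson OKE)
  then have "x + y = of_int (a + c) + of_int (b + d) * w" by (simp add: algebra_simps)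
  then show ?thesis unfolding OK_iff by blast
qed

lemma OK_uminus [simp]: "x \<in> OK D \<Longrightarrow> - x \<in> OK D"
proof -
  assume "x \<in> OK D"
  then obtain a b where "x = of_int a + of_int b * w" by (meson OKE)
  then have "- x = of_int (- a) + of_int (- b) * w" by (simp add: algebra_simps)
  then show ?thesis unfolding OK_iff by blast
qed

lemma OK_diff [simp]: "x \<in> OK D \<Longrightarrow> y \<in> OK D \<Longrightarrow> x - y \<in> OK D"
  using OK_add OK_uminus by (metis diff_conv_add_uminus)

lemma OK_mult [simp]: "x \<in> OK D \<Longrightarrow> y \<in> OK D \<Longrightarrow> x * y \<in> OK D"
  unfolding OK_iff using times_root_expand[OF omega_roots(1)] by blast

lemma OK_sum: "(\<And>i. i \<in> A \<Longrightarrow> f i \<in> OK D) \<Longrightarrow> sum f A \<in> OK D"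
  by (induction A rule: infinite_finite_induct) auto

text \<open>Well defined on \<open>OK D\<close> since \<open>1, w\<close> are linearly independent over \<open>\<int>\<close>
  (\<open>omega_coords_unique\<close>); its value outside \<open>OK D\<close> is unspecified.\<close>

definition conjugate :: "real \<Rightarrow> real" where
  "conjugate x = (SOME y. \<exists>a b. x = of_int a + of_int b * w \<and> y = of_int a + of_int b * w')"

lemma conjugate_eq [simp]: "conjugate (of_int a + of_int b * w) = of_int a + of_int b * w'"
proof -
  let ?P = "\<lambda>y. \<exists>c d. of_int a + of_int b * w = of_int c + of_int d * w \<and> y = of_int c + of_int d * w'"
  have "?P (of_int a + of_int b * w')" by blast
  then have "?P (conjugate (of_int a + of_int b * w))" unfolding conjugate_def by (rule someI)
  then show ?thesis using omega_coords_unique by blast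
qed

lemma conjugate_of_int [simp]: "conjugate (of_int k) = of_int k"
  using conjugate_eq[of k 0] by simp

lemma conjugate_numeral [simp]: "conjugate (numeral n) = numeral n" "conjugate 0 = 0" "conjugate 1 = 1"
  using conjugate_of_int[of "numeral n"] conjugate_of_int[of 0] conjugate_of_int[of 1] by simp_all

lemma conjugate_of_nat [simp]: "conjugate (of_nat n) = of_nat n"
  using conjugate_of_int[of "int n"] by simp

lemma conjugate_add [simp]: "x \<in> OK D \<Longrightarrow> y \<in> OK D \<Longrightarrow> conjugate (x + y) = conjugate x + conjugate y"
proof -
  assume "x \<in> OK D" "y \<in> OK D"
  then obtain a b c d where xy: "x = of_int a + of_int b * w" "y = of_int c + of_int d * w"
    by (meson OKE)
  then have "x + y = of_int (a + c) + of_int (b + d) * w" by (simp add: algebra_simps)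
  then show ?thesis unfolding xy by (simp only: conjugate_eq) (simp add: algebra_simps)
qed

lemma conjugate_uminus [simp]: "x \<in> OK D \<Longrightarrow> conjugate (- x) = - conjugate x"
proof -
  assume "x \<in> OK D"
  then obtain a b where x: "x = of_int a + of_int b * w" by (meson OKE)
  then have "- x = of_int (- a) + of_int (- b) * w" by (simp add: algebra_simps)
  then show ?thesis unfolding x by (simp only: conjugate_eq)
qed

lemma conjugate_diff [simp]: "x \<in> OK D \<Longrightarrow> y \<in> OK D \<Longrightarrow> conjugate (x - y) = conjugate x - conjugate y"
  using conjugate_add[of x "- y"] by simp

lemma conjugate_mult [simp]: "x \<in> OK D \<Longrightarrow> y \<in> OK D \<Longrightarrow> conjugate (x * y) = conjugate x * conjugate y"
proof -
  assume "x \<in> OK D" "y \<in> OK D"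
  then obtain a b c d where "x = of_int a + of_int b * w" "y = of_int c + of_int d * w"
    by (meson OKE)
  then show ?thesis
    by (simp only: times_root_expand[OF omega_roots(1)] times_root_expand[OF omega_roots(2)] conjugate_eq)
qed

lemma conjugate_sum: "(\<And>i. i \<in> A \<Longrightarrow> f i \<in> OK D) \<Longrightarrow> conjugate (sum f A) = (\<Sum>i\<in>A. conjugate (f i))"
  by (induction A rule: infinite_finite_induct) (simp_all add: OK_sum)

lemma conjugate_eq_0_iff: "x \<in> OK D \<Longrightarrow> conjugate x = 0 \<longleftrightarrow> x = 0"
  by (elim OKE) (simp add: int_combination_eq_0_iff omega_irrational omega_conj_irrational)

lemma totally_positive_iff: "totally_positive D x \<longleftrightarrow> x \<in> OK D \<and> x > 0 \<and> conjugate x > 0"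
  unfolding totally_positive_def OK_iff by force

lemma totally_positive_if_nonneg:
  assumes "x \<in> OK D" "x \<ge> 0" "conjugate x \<ge> 0" "x \<noteq> 0"
  shows "totally_positive D x"
  using assms conjugate_eq_0_iff by (force simp: totally_positive_iff)

lemma totally_positive_add_diff_sqrt:
  assumes "totally_positive D Z" "totally_positive D W" "Z \<noteq> W" "g \<in> OK D" "g * g = Z * W"
  shows "totally_positive D (Z + W - 2 * g)" "totally_positive D (Z + W + 2 * g)"
proof -
  have OK: "Z \<in> OK D" "W \<in> OK D" and pos: "Z > 0" "W > 0" "conjugate Z > 0" "conjugate W > 0"
    using assms(1,2) by (auto simp: totally_positive_iff)
  have "conjugate Z \<noteq> conjugate W"
    using conjugate_eq_0_iff[of "Z - W"] OK assms(3) by simp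
  moreover have "conjugate g * conjugate g = conjugate Z * conjugate W"
    using arg_cong[OF assms(5), of conjugate] OK assms(4) by simp
  ultimately have "conjugate Z + conjugate W - 2 * conjugate g > 0"
    "conjugate Z + conjugate W + 2 * conjugate g > 0"
    using sum_pm_twice_sqrt_pos pos by blast+
  moreover have "Z + W - 2 * g > 0" "Z + W + 2 * g > 0"
    using sum_pm_twice_sqrt_pos pos assms(3,5) by blast+
  ultimately show "totally_positive D (Z + W - 2 * g)" "totally_positive D (Z + W + 2 * g)"
    using OK assms(4) by (simp_all add: totally_positive_iff)
qed

end

section \<open>Indecomposables along an adapted basis\<close>

locale adapted_basis = real_quadratic_field +
  fixes b1 b2 :: real
  assumes b1_OK: "b1 \<in> OK D" and b2_OK: "b2 \<in> OK D"
    and b1_pos: "b1 > 0" and b2_pos: "b2 > 0"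
    and conjugate_b1_pos: "conjugate b1 > 0" and conjugate_b2_neg: "conjugate b2 < 0"
    and spans_OK: "z \<in> OK D \<Longrightarrow> \<exists>x y. z = of_int x * b1 + of_int y * b2"
begin

lemma conjugate_coords:
  "conjugate (of_int x * b1 + of_int y * b2) = of_int x * conjugate b1 + of_int y * conjugate b2"
  using b1_OK b2_OK by simp

lemma first_coord_ge_1:
  assumes "totally_positive D (of_int x * b1 + of_int y * b2)"
  shows "x \<ge> 1"
proof (rule ccontr)
  assume "\<not> x \<ge> 1"
  then have "of_int x * b1 \<le> 0" "of_int x * conjugate b1 \<le> 0"
    using b1_pos conjugate_b1_pos by (simp_all add: mult_nonpos_nonneg)
  then have "of_int y * b2 > 0" "of_int y * conjugate b2 > 0"
    using assms by (auto simp: totally_positive_iff conjugate_coords)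
  then show False using b2_pos conjugate_b2_neg by (simp add: zero_less_mult_iff)
qed

lemma coords_unique:
  assumes "of_int x * b1 + of_int y * b2 = of_int x' * b1 + of_int y' * b2"
  shows "x = x' \<and> y = y'"
proof -
  define d f where "d = real_of_int (x - x')" and "f = real_of_int (y' - y)"
  have "d * b1 = f * b2" using assms by (simp add: d_def f_def algebra_simps)
  moreover have "d * conjugate b1 = f * conjugate b2"
  proof -
    have "of_int x * conjugate b1 + of_int y * conjugate b2 = of_int x' * conjugate b1 + of_int y' * conjugate b2"
      using arg_cong[OF assms, of conjugate] by (simp only: conjugate_coords)
    then show ?thesis by (simp add: d_def f_def algebra_simps)
  qed
  ultimately have "d * (b1 * conjugate b2 - conjugate b1 * b2) = 0"
    by (simp add: algebra_simps)
  moreover have "b1 * conjugate b2 < 0" "conjugate b1 * b2 > 0"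
    using b1_pos b2_pos conjugate_b1_pos conjugate_b2_neg by (simp_all add: mult_pos_neg)
  ultimately have "d = 0" by simp
  with \<open>d * b1 = f * b2\<close> b2_pos have "f = 0" by simp
  with \<open>d = 0\<close> show ?thesis by (simp add: d_def f_def)
qed

text \<open>Totally positive summands would both have first coordinate at least \<open>1\<close>.\<close>

lemma indecomposable:
  assumes "b1 + of_int y * b2 = s + t" "totally_positive D s" "totally_positive D t"
  shows False
proof -
  have "s \<in> OK D" "t \<in> OK D" using assms(2,3) by (simp_all add: totally_positive_iff)
  then obtain x1 y1 x2 y2 where s: "s = of_int x1 * b1 + of_int y1 * b2"
    and t: "t = of_int x2 * b1 + of_int y2 * b2"
    using spans_OK by meson
  have "x1 \<ge> 1" using assms(2) s first_coord_ge_1 by simp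
  moreover have "x2 \<ge> 1" using assms(3) t first_coord_ge_1 by simp
  moreover have "of_int 1 * b1 + of_int y * b2 = of_int (x1 + x2) * b1 + of_int (y1 + y2) * b2"
    using assms(1) s t by (simp add: algebra_simps)
  then have "1 = x1 + x2" by (rule coords_unique[THEN conjunct1])
  ultimately show False by simp
qed

lemma single_square_term:
  fixes a x :: "nat \<Rightarrow> real"
  assumes a: "\<forall>i<m. totally_positive D (a i)" and x: "\<forall>i<m. x i \<in> OK D"
    and y: "b1 + of_int y * b2 = (\<Sum>i<m. a i * (x i)^2)"
  shows "\<exists>j<m. b1 + of_int y * b2 = a j * (x j)^2"
proof -
  define t where "t i = a i * (x i)^2" for i
  have t: "t i \<in> OK D" "t i \<ge> 0" "conjugate (t i) \<ge> 0" if "i < m" for i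
  proof -
    have "a i \<in> OK D" "a i > 0" "conjugate (a i) > 0"
      using a that by (simp_all add: totally_positive_iff)
    moreover have "x i \<in> OK D" using x that by simp
    ultimately show "t i \<in> OK D" "t i \<ge> 0" "conjugate (t i) \<ge> 0"
      by (simp_all add: t_def power2_eq_square)
  qed
  have "b1 + of_int y * b2 \<noteq> 0"
    using coords_unique[of 1 y 0 0] by auto
  then have "(\<Sum>i<m. t i) \<noteq> 0" using y by (simp add: t_def)
  then obtain j where j: "j < m" "t j \<noteq> 0" by (meson lessThan_iff sum.neutral)
  define R where "R = (\<Sum>i\<in>{..<m} - {j}. t i)"
  have yR: "b1 + of_int y * b2 = t j + R"
    using y j by (simp add: t_def R_def sum.remove)
  have "R \<in> OK D" unfolding R_def by (rule OK_sum) (use t in auto)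
  moreover have "R \<ge> 0" unfolding R_def by (rule sum_nonneg) (use t in auto)
  moreover have "conjugate R \<ge> 0"
    unfolding R_def by (subst conjugate_sum) (use t in \<open>auto intro!: sum_nonneg\<close>)
  moreover have "totally_positive D (t j)"
    using t[OF j(1)] j(2) by (rule totally_positive_if_nonneg)
  ultimately have "R = 0"
    using indecomposable[OF yR] totally_positive_if_nonneg by blast
  with yR j show ?thesis by (auto simp: t_def)
qed

lemma sqrt_of_product_on_b2_axis:
  assumes Z: "totally_positive D (b1 + of_int y * b2)"
    and W: "totally_positive D (b1 + of_int y' * b2)" and "y \<noteq> y'"
    and g: "g \<in> OK D" "g * g = (b1 + of_int y * b2) * (b1 + of_int y' * b2)"
  obtains f where "g = of_int f * b2"
proof -
  obtain e f where ef: "g = of_int e * b1 + of_int f * b2" using spans_OK g(1) by meson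
  have "b1 + of_int y * b2 \<noteq> b1 + of_int y' * b2" using \<open>y \<noteq> y'\<close> b2_pos by simp
  note tp = totally_positive_add_diff_sqrt[OF Z W this g]
  have "(b1 + of_int y * b2) + (b1 + of_int y' * b2) - 2 * g =
      of_int (2 - 2 * e) * b1 + of_int (y + y' - 2 * f) * b2"
    "(b1 + of_int y * b2) + (b1 + of_int y' * b2) + 2 * g =
      of_int (2 + 2 * e) * b1 + of_int (y + y' + 2 * f) * b2"
    unfolding ef by (simp_all add: algebra_simps)
  then have "2 - 2 * e \<ge> 1" "2 + 2 * e \<ge> 1"
    using tp by (metis first_coord_ge_1)+
  then have "e = 0" by simp
  with ef have "g = of_int f * b2" by simp
  then show ?thesis by (rule that)
qed

text \<open>Two distinct \<open>b1 + y b2\<close>, \<open>b1 + y' b2\<close> represented by the same \<open>a x\<^sup>2\<close> have a square product,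
  which forces \<open>b1/b2\<close> and its conjugate to be the two roots of \<open>(X + y)(X + y') = f\<^sup>2\<close>.\<close>

lemma same_coefficient_sum:
  assumes OK: "a \<in> OK D" "x \<in> OK D" "v \<in> OK D"
    and Z: "b1 + of_int y * b2 = a * x^2" "totally_positive D (b1 + of_int y * b2)"
    and W: "b1 + of_int y' * b2 = a * v^2" "totally_positive D (b1 + of_int y' * b2)"
    and "y \<noteq> y'"
  shows "of_int (y + y') = - (b1 / b2 + conjugate b1 / conjugate b2)"
proof -
  have "(a * x * v) * (a * x * v) = (b1 + of_int y * b2) * (b1 + of_int y' * b2)"
    unfolding Z(1) W(1) by (simp add: power2_eq_square)
  moreover have "a * x * v \<in> OK D" using OK by simp
  ultimately obtain f where f: "a * x * v = of_int f * b2"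
    using sqrt_of_product_on_b2_axis[OF Z(2) W(2) \<open>y \<noteq> y'\<close>] by blast
  have prod: "(b1 + of_int y * b2) * (b1 + of_int y' * b2) = (of_int f * b2)^2"
    using \<open>(a * x * v) * (a * x * v) = _\<close> by (simp add: f power2_eq_square)
  then have "conjugate ((b1 + of_int y * b2) * (b1 + of_int y' * b2)) = conjugate ((of_int f * b2)^2)"
    by simp
  then have prod': "(conjugate b1 + of_int y * conjugate b2) * (conjugate b1 + of_int y' * conjugate b2)
      = (of_int f * conjugate b2)^2"
    using b1_OK b2_OK by (simp add: power2_eq_square)
  have "b2 \<noteq> 0" "conjugate b2 \<noteq> 0" using b2_pos conjugate_b2_neg by auto
  then have "(b1 / b2 + of_int y) * (b1 / b2 + of_int y') = of_int f ^ 2"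
    "(conjugate b1 / conjugate b2 + of_int y) * (conjugate b1 / conjugate b2 + of_int y') = of_int f ^ 2"
    using prod prod' by (simp_all add: field_simps power2_eq_square)
  moreover have "b1 / b2 \<noteq> conjugate b1 / conjugate b2"
    using b1_pos b2_pos conjugate_b1_pos conjugate_b2_neg divide_pos_neg[of "conjugate b1"]
    by (smt (verit) divide_pos_pos)
  ultimately have "of_int y + of_int y' = - (b1 / b2 + conjugate b1 / conjugate b2)"
    by (rule sum_of_common_roots)
  then show ?thesis by simp
qed

lemma card_same_coefficient_le_2:
  assumes "c \<in> OK D" and tp: "\<forall>y\<le>N. totally_positive D (b1 + of_nat y * b2)"
  shows "card {y. y \<le> N \<and> (\<exists>x\<in>OK D. b1 + of_nat y * b2 = c * x^2)} \<le> 2"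
    (is "card ?Y \<le> 2")
proof -
  have "card (real ` ?Y) \<le> 2"
  proof (rule card_le_2_if_pairwise_sums_eq)
    fix r r' assume "r \<in> real ` ?Y" "r' \<in> real ` ?Y" "r \<noteq> r'"
    then obtain y y' x v where r: "r = real y" "r' = real y'" and "int y \<noteq> int y'"
      and "x \<in> OK D" "v \<in> OK D" "y \<le> N" "y' \<le> N"
      and "b1 + of_int (int y) * b2 = c * x^2" "b1 + of_int (int y') * b2 = c * v^2"
      by auto
    with assms have "of_int (int y + int y') = - (b1 / b2 + conjugate b1 / conjugate b2)"
      using same_coefficient_sum by (metis of_int_of_nat_eq)
    then show "r + r' = - (b1 / b2 + conjugate b1 / conjugate b2)" using r by simp
  qed
  then show ?thesis by (simp add: card_image)
qed

lemma universal_form_rank_bound: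
  assumes univ: "universal_diag_form D m a"
    and conj_pos: "\<forall>y\<le>N. conjugate (b1 + of_nat y * b2) > 0"
  shows "N + 1 \<le> 2 * m"
proof -
  have a: "\<forall>i<m. totally_positive D (a i)" using univ by (simp add: universal_diag_form_def)
  have tp: "\<forall>y\<le>N. totally_positive D (b1 + of_nat y * b2)"
    using conj_pos b1_OK b2_OK b1_pos b2_pos by (simp add: totally_positive_iff add_pos_nonneg)
  define Y where "Y j = {y. y \<le> N \<and> (\<exists>x\<in>OK D. b1 + of_nat y * b2 = a j * x^2)}" for j
  have "{..N} \<subseteq> (\<Union>j<m. Y j)"
  proof
    fix y assume "y \<in> {..N}"
    then obtain x where x: "\<forall>i<m. x i \<in> OK D" and "b1 + of_int (int y) * b2 = (\<Sum>i<m. a i * (x i)^2)"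
      using univ tp unfolding universal_diag_form_def totally_positive_iff by auto
    then obtain j where "j < m" "b1 + of_int (int y) * b2 = a j * (x j)^2"
      using single_square_term[OF a] by blast
    with x \<open>y \<in> {..N}\<close> show "y \<in> (\<Union>j<m. Y j)" unfolding Y_def by auto
  qed
  moreover have "card (Y j) \<le> 2" if "j < m" for j
    using card_same_coefficient_le_2[OF _ tp] a that by (simp add: Y_def totally_positive_iff)
  then have "card (\<Union>j<m. Y j) \<le> 2 * m"
    using card_UN_le[of "{..<m}" Y] sum_mono[of "{..<m}" "\<lambda>j. card (Y j)" "\<lambda>_. 2"] by simp
  ultimately show ?thesis
    using card_mono[of "\<Union>j<m. Y j" "{..N}"] unfolding Y_def by simp
qed

end

section \<open>Partial quotients of \<open>\<omega>\<close> at odd indices\<close>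

context real_quadratic_field
begin

abbreviation "xi \<equiv> cf_rem w"

lemma u_pos: "u D n \<ge> 1"
proof (cases n)
  case 0
  then show ?thesis using omega_gt_1[OF D_gt_1] by (simp add: u_def cf_def le_floor_iff)
qed (simp add: u_def cf_Suc_pos omega_irrational)

lemma conv_pos: "conv_num D k \<ge> 1 \<and> conv_den D k \<ge> 0"
proof (induction k rule: induct_nat_012)
  case (ge2 k)
  have "u D (Suc k) * conv_num D (Suc k) \<ge> 1" "u D (Suc k) * conv_den D (Suc k) \<ge> 0"
    using ge2.IH(2) u_pos[of "Suc k"] mult_mono[of 1 "u D (Suc k)" 1 "conv_num D (Suc k)"] by simp_all
  with ge2.IH(1) show ?case by simp
qed (simp_all add: u_pos)

definition alpha :: "nat \<Rightarrow> real" where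
  "alpha k = of_int (conv_num D k) - of_int (conv_den D k) * w'"

definition alpha' :: "nat \<Rightarrow> real" where
  "alpha' k = of_int (conv_num D k) - of_int (conv_den D k) * w"

lemma alpha_pos: "alpha k > 0"
proof -
  have "of_int (conv_den D k) * w' \<le> 0"
    using conv_pos[of k] omega_conj_neg[OF D_gt_1] by (simp add: mult_nonneg_nonpos)
  then show ?thesis using conv_pos[of k] by (simp add: alpha_def)
qed

lemma alpha_eq: "alpha k = of_int (conv_num D k - omega_trace D * conv_den D k) + of_int (conv_den D k) * w"
  unfolding alpha_def omega_conj_eq by (simp add: algebra_simps)

lemma alpha_OK [simp]: "alpha k \<in> OK D"
  unfolding OK_iff alpha_eq by blast

lemma conjugate_alpha [simp]: "conjugate (alpha k) = alpha' k"
  unfolding alpha_eq conjugate_eq alpha'_def omega_conj_eq by (simp add: algebra_simps)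

lemma alpha'_mult_xi: "alpha' (Suc k) * xi (Suc k) = - alpha' k"
proof (induction k)
  case 0
  have "xi 1 * (w - of_int (u D 0)) = 1"
    using cf_less_cf_rem[OF omega_irrational, of 0] by (simp add: cf_rem_Suc_eq u_def)
  then show ?case by (simp add: alpha'_def algebra_simps)
next
  case (Suc k)
  let ?f = "xi (Suc k) - of_int (u D (Suc k))"
  have rec: "alpha' (Suc (Suc k)) = - alpha' (Suc k) * ?f"
    using Suc by (simp add: alpha'_def algebra_simps)
  have "alpha' (Suc (Suc k)) * xi (Suc (Suc k)) = - alpha' (Suc k) * (xi (Suc (Suc k)) * ?f)"
    unfolding rec by (simp add: algebra_simps)
  also have "xi (Suc (Suc k)) * ?f = 1"
    using cf_less_cf_rem[OF omega_irrational, of "Suc k"] by (simp add: cf_rem_Suc_eq u_def)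
  finally show ?case by simp
qed

lemma alpha'_sign: "(even k \<longrightarrow> alpha' k > 0) \<and> (odd k \<longrightarrow> alpha' k < 0)"
proof (induction k)
  case (Suc k)
  have xi: "xi (Suc k) > 0" using cf_rem_Suc_gt_1[OF omega_irrational, of k] by simp
  then have "alpha' (Suc k) = - alpha' k / xi (Suc k)" using alpha'_mult_xi[of k] by (simp add: field_simps)
  then show ?case using Suc xi by (auto simp: divide_neg_pos)
qed (simp add: alpha'_def)

lemma alpha_spans_OK:
  assumes "z \<in> OK D"
  shows "\<exists>x y. z = of_int x * alpha k + of_int y * alpha (Suc k)"
proof -
  obtain a b where z: "z = of_int a + of_int b * w" using assms by (rule OKE)
  define p1 q1 p2 q2 where "p1 = conv_num D k - omega_trace D * conv_den D k" and "q1 = conv_den D k"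
    and "p2 = conv_num D (Suc k) - omega_trace D * conv_den D (Suc k)" and "q2 = conv_den D (Suc k)"
  define d :: int where "d = (-1)^k"
  have det: "d * (p1 * q2 - p2 * q1) = 1"
    using conv_det[of D k] by (simp add: p1_def p2_def q1_def q2_def d_def algebra_simps flip: power_add)
  define x y where "x = d * (a * q2 - b * p2)" and "y = d * (b * p1 - a * q1)"
  have "x * p1 + y * p2 = a" "x * q1 + y * q2 = b"
    using det by (simp_all add: x_def y_def algebra_simps)
  moreover have "of_int x * alpha k + of_int y * alpha (Suc k) =
      of_int (x * p1 + y * p2) + of_int (x * q1 + y * q2) * w"
    unfolding alpha_eq p1_def p2_def q1_def q2_def by (simp add: algebra_simps)
  ultimately show ?thesis using z by metis
qed

lemma adapted_basis_alpha: "even k \<Longrightarrow> adapted_basis D (alpha k) (alpha (Suc k))"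
  by unfold_locales (use alpha'_sign alpha_spans_OK in \<open>auto simp: alpha_pos D_gt_1 squarefree_D\<close>)

lemma odd_partial_quotient_bound:
  assumes univ: "universal_diag_form D m a" and "even k"
  shows "u D (Suc k) + 1 \<le> 2 * int m"
proof -
  interpret adapted_basis D "alpha k" "alpha (Suc k)"
    using adapted_basis_alpha[OF \<open>even k\<close>] .
  have "conjugate (alpha k + of_nat y * alpha (Suc k)) > 0" if "y \<le> nat (u D (Suc k))" for y
  proof -
    have xi: "xi (Suc k) > 0" using cf_rem_Suc_gt_1[OF omega_irrational, of k] by simp
    have "real y < xi (Suc k)"
      using that u_pos[of "Suc k"] cf_less_cf_rem[OF omega_irrational, of "Suc k"]
      by (simp add: u_def)
    then have "0 < 1 - real y / xi (Suc k)" using xi by simp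
    moreover have "alpha' k > 0" using alpha'_sign \<open>even k\<close> by blast
    ultimately have "0 < alpha' k * (1 - real y / xi (Suc k))" by simp
    also have "\<dots> = alpha' k + real y * alpha' (Suc k)"
      using alpha'_mult_xi[of k] xi by (simp add: field_simps)
    finally show ?thesis by simp
  qed
  then have "nat (u D (Suc k)) + 1 \<le> 2 * m"
    using universal_form_rank_bound[OF univ] by blast
  then show ?thesis using u_pos[of "Suc k"] by linarith
qed

section \<open>Periodicity of the expansion\<close>

abbreviation "sqrtD \<equiv> sqrt (real D)"

text \<open>A pair \<open>(P, Q)\<close> encodes the quadratic irrational \<open>(P + \<surd>D)/Q\<close>.\<close>

fun qval :: "int \<times> int \<Rightarrow> real" where
  "qval (P, Q) = (of_int P + sqrtD) / of_int Q"

fun qconj :: "int \<times> int \<Rightarrow> real" where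
  "qconj (P, Q) = (of_int P - sqrtD) / of_int Q"

fun qvalid :: "int \<times> int \<Rightarrow> bool" where
  "qvalid (P, Q) \<longleftrightarrow> Q \<noteq> 0 \<and> Q dvd (int D - P^2)"

fun qstep :: "int \<times> int \<Rightarrow> int \<times> int" where
  "qstep (P, Q) = (let P' = \<lfloor>qval (P, Q)\<rfloor> * Q - P in (P', (int D - P'^2) div Q))"

definition qreduced :: "int \<times> int \<Rightarrow> bool" where
  "qreduced st \<longleftrightarrow> qval st > 1 \<and> -1 < qconj st \<and> qconj st < 0"

lemma qval_inj:
  assumes "Q1 \<noteq> 0" "Q2 \<noteq> 0" "qval (P1, Q1) = qval (P2, Q2)"
  shows "(P1, Q1) = (P2, Q2)"
proof -
  have "of_int (P1 * Q2 - P2 * Q1) + of_int (Q2 - Q1) * sqrtD = 0"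
    using assms by (simp add: field_simps)
  then have "P1 * Q2 - P2 * Q1 = 0 \<and> Q2 - Q1 = 0"
    using int_combination_eq_0_iff[OF sqrt_squarefree_irrational[OF D_gt_1 squarefree_D]] by blast
  then have "Q1 = Q2" "P1 * Q1 = P2 * Q1" by auto
  with assms(1) show ?thesis by simp
qed

lemma qval_irrational: "Q \<noteq> 0 \<Longrightarrow> qval (P, Q) \<notin> \<rat>"
proof
  assume "Q \<noteq> 0" "qval (P, Q) \<in> \<rat>"
  then have "qval (P, Q) * of_int Q - of_int P \<in> \<rat>" by (blast intro: Rats_diff Rats_mult Rats_of_int)
  moreover have "qval (P, Q) * of_int Q - of_int P = sqrtD" using \<open>Q \<noteq> 0\<close> by simp
  ultimately show False using sqrt_squarefree_irrational[OF D_gt_1 squarefree_D] by simp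
qed

lemma
  assumes "qvalid st"
  shows qvalid_qstep: "qvalid (qstep st)"
    and qval_qstep: "qval (qstep st) = 1 / frac (qval st)"
    and qconj_qstep: "qconj (qstep st) = 1 / (qconj st - of_int \<lfloor>qval st\<rfloor>)"
proof -
  obtain P Q where st: "st = (P, Q)" by fastforce
  define a where "a = \<lfloor>qval st\<rfloor>"
  define P' where "P' = a * Q - P"
  define Q' where "Q' = (int D - P'^2) div Q"
  have step: "qstep st = (P', Q')" by (simp add: st a_def P'_def Q'_def Let_def)
  have "Q \<noteq> 0" "Q dvd (int D - P^2)" using assms by (simp_all add: st)
  moreover have "int D - P'^2 = (int D - P^2) - Q * (a^2 * Q - 2 * a * P)"
    by (simp add: P'_def power2_eq_square algebra_simps)
  ultimately have "Q dvd (int D - P'^2)" by (metis dvd_diff dvd_triv_left)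
  then have QQ': "Q * Q' = int D - P'^2" by (simp add: Q'_def)
  then have QQ'_real: "of_int Q * of_int Q' = (sqrtD - of_int P') * (sqrtD + of_int P')"
    by (simp add: algebra_simps power2_eq_square flip: of_int_mult)
  moreover have "sqrtD - of_int P' \<noteq> 0" "sqrtD + of_int P' \<noteq> 0"
    using qval_irrational[of 1 "P'"] qval_irrational[of 1 "- P'"] by (auto simp: algebra_simps)
  ultimately have "Q' \<noteq> 0" by auto
  with QQ' show "qvalid (qstep st)" by (simp add: step dvd_def) (metis mult.commute)
  have "frac (qval st) = qval st - of_int a" by (simp add: frac_def a_def)
  also have "\<dots> = (sqrtD - of_int P') / of_int Q"
    using \<open>Q \<noteq> 0\<close> by (simp add: st P'_def field_simps)
  finally have frac: "frac (qval st) = (sqrtD - of_int P') / of_int Q" .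
  have "qval (qstep st) * frac (qval st) = 1"
    unfolding frac using QQ'_real \<open>Q \<noteq> 0\<close> \<open>Q' \<noteq> 0\<close> by (simp add: step algebra_simps)
  then show "qval (qstep st) = 1 / frac (qval st)"
    by (metis mult_zero_right nonzero_eq_divide_eq zero_neq_one)
  have "qconj st - of_int a = - (sqrtD + of_int P') / of_int Q"
    using \<open>Q \<noteq> 0\<close> by (simp add: st P'_def field_simps)
  then have "qconj (qstep st) * (qconj st - of_int a) = 1"
    using QQ'_real \<open>Q \<noteq> 0\<close> \<open>Q' \<noteq> 0\<close> by (simp add: step algebra_simps)
  then show "qconj (qstep st) = 1 / (qconj st - of_int \<lfloor>qval st\<rfloor>)"
    by (metis a_def mult_zero_right nonzero_eq_divide_eq zero_neq_one)
qed

lemma qstep_reduced: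
  assumes "qvalid st" "qreduced st"
  shows "qreduced (qstep st)"
proof -
  obtain P Q where st: "st = (P, Q)" by fastforce
  with assms(1) have "qval st \<notin> \<int>" using qval_irrational Ints_subset_Rats by auto
  then have "0 < frac (qval st)" "frac (qval st) < 1" by (simp_all add: frac_lt_1)
  then have "qval (qstep st) > 1" using qval_qstep[OF assms(1)] by simp
  moreover have "\<lfloor>qval st\<rfloor> \<ge> 1" using assms(2) by (simp add: qreduced_def le_floor_iff)
  then have "qconj st - of_int \<lfloor>qval st\<rfloor> < -1" using assms(2) unfolding qreduced_def by linarith
  then have "-1 < qconj (qstep st)" "qconj (qstep st) < 0"
    unfolding qconj_qstep[OF assms(1)] by (simp_all add: less_divide_eq divide_less_0_iff)
  ultimately show ?thesis by (simp add: qreduced_def)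
qed

lemma qreduced_bounds:
  assumes "qreduced (P, Q)"
  shows "P \<in> {1..int D}" "Q \<in> {1..2 * int D}"
proof -
  have val: "(of_int P + sqrtD) / of_int Q > 1" and conj: "-1 < (of_int P - sqrtD) / of_int Q"
    "(of_int P - sqrtD) / of_int Q < 0"
    using assms by (simp_all add: qreduced_def)
  have "Q \<noteq> 0" using val by auto
  have "(of_int P + sqrtD) / of_int Q - (of_int P - sqrtD) / of_int Q = 2 * sqrtD / of_int Q"
    using \<open>Q \<noteq> 0\<close> by (simp add: field_simps)
  then have quot: "2 * sqrtD / of_int Q > 1" using val conj by linarith
  have "sqrtD > 0" using D_gt_1 by simp
  have "Q > 0"
  proof (rule ccontr)
    assume "\<not> Q > 0"
    then have "2 * sqrtD / of_int Q \<le> 0" using \<open>sqrtD > 0\<close> by (simp add: divide_nonneg_nonpos)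
    with quot show False by simp
  qed
  with quot have Q: "0 < real_of_int Q" "of_int Q < 2 * sqrtD" by (simp_all add: less_divide_eq)
  have "(of_int P + sqrtD) / of_int Q + (of_int P - sqrtD) / of_int Q = 2 * of_int P / of_int Q"
    using \<open>Q \<noteq> 0\<close> by (simp add: field_simps)
  then have "2 * of_int P / of_int Q > (0::real)" using val conj by linarith
  then have "0 < real_of_int P" using Q by (simp add: zero_less_divide_iff)
  moreover have "of_int P < sqrtD" using conj Q by (simp add: divide_less_0_iff)
  moreover have "sqrtD \<le> real D" using D_gt_1 real_sqrt_le_mono[of "real D" "real D ^ 2"]
    by (simp add: power2_eq_square)
  ultimately show "P \<in> {1..int D}" "Q \<in> {1..2 * int D}" using Q by auto
qed

lemma qstep_inj_on: "inj_on qstep {st. qvalid st \<and> qreduced st}"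
proof (rule inj_onI)
  fix s1 s2 assume "s1 \<in> {st. qvalid st \<and> qreduced st}" "s2 \<in> {st. qvalid st \<and> qreduced st}"
    and "qstep s1 = qstep s2"
  then have s1: "qvalid s1" "qreduced s1" and s2: "qvalid s2" "qreduced s2" by auto
  define c c' where "c = qconj (qstep s1)" and "c' = qval (qstep s1)"
  have "qconj s1 = of_int \<lfloor>qval s1\<rfloor> + 1 / c" "qconj s2 = of_int \<lfloor>qval s2\<rfloor> + 1 / c"
    using qconj_qstep[OF s1(1)] qconj_qstep[OF s2(1)] \<open>qstep s1 = qstep s2\<close> by (simp_all add: c_def)
  then have "\<lfloor>qval s1\<rfloor> = \<lfloor>qval s2\<rfloor>"
    using s1(2) s2(2) unfolding qreduced_def by linarith
  moreover have "qval s1 = of_int \<lfloor>qval s1\<rfloor> + 1 / c'" "qval s2 = of_int \<lfloor>qval s2\<rfloor> + 1 / c'"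
    using qval_qstep[OF s1(1)] qval_qstep[OF s2(1)] \<open>qstep s1 = qstep s2\<close>
    by (simp_all add: c'_def frac_def)
  ultimately have "qval s1 = qval s2" by simp
  moreover obtain P1 Q1 P2 Q2 where "s1 = (P1, Q1)" "s2 = (P2, Q2)" by fastforce
  ultimately show "s1 = s2" using s1(1) s2(1) qval_inj[of Q1 Q2 P1 P2] by simp
qed

definition qstart :: "int \<times> int" where
  "qstart = (if D mod 4 = 1 then (2 * u D 0 - 1, 2) else (u D 0, 1))"

lemma
  shows qval_qstart: "qval qstart = w + of_int (u D 0 - omega_trace D)"
    and qconj_qstart: "qconj qstart = of_int (u D 0) - w"
    and qvalid_qstart: "qvalid qstart" and qreduced_qstart: "qreduced qstart"
proof -
  show val: "qval qstart = w + of_int (u D 0 - omega_trace D)" and conj: "qconj qstart = of_int (u D 0) - w"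
    by (auto simp: qstart_def omega_def omega_trace_def field_simps)
  have "D mod 4 = 1 \<Longrightarrow> odd (int D)" by presburger
  then have "D mod 4 = 1 \<Longrightarrow> even (int D - (2 * u D 0 - 1)^2)" by simp
  then show "qvalid qstart" by (auto simp: qstart_def)
  have "of_int (u D 0) < w" "w < of_int (u D 0) + 1"
    using cf_less_cf_rem[OF omega_irrational, of 0] by (simp_all add: u_def cf_def)
  moreover have "omega_trace D \<le> 1" "w > 1" by (simp_all add: omega_trace_def omega_gt_1[OF D_gt_1])
  ultimately show "qreduced qstart" using u_pos[of 0] by (simp add: qreduced_def val conj)
qed

lemma qstep_iterate:
  "qvalid ((qstep ^^ n) qstart) \<and> qreduced ((qstep ^^ n) qstart)
    \<and> qval ((qstep ^^ n) qstart) = cf_rem (qval qstart) n"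
  by (induction n) (simp_all add: qvalid_qstart qreduced_qstart qvalid_qstep qval_qstep qstep_reduced cf_rem.simps(2))

lemma u_eq_cf_qstart:
  assumes "n \<ge> 1"
  shows "u D n = cf (qval qstart) n"
proof -
  obtain k where "n = Suc k" using assms by (cases n) auto
  then show ?thesis by (simp only: u_def cf_def qval_qstart cf_rem_add_of_int)
qed

lemma cf_qstart_0: "cf (qval qstart) 0 = 2 * u D 0 - omega_trace D"
  by (simp add: cf_def qval_qstart u_def flip: floor_add_int)

text \<open>The complete quotients of \<open>qval qstart = u\<^sub>0 - w'\<close> are reduced and take finitely many
  values, and reduced ones determine their predecessors, so its expansion is purely
  periodic; it coincides with that of \<open>w\<close> except for the first partial quotient.\<close>

lemma u_purely_periodic:
  obtains T where "T > 0" "\<forall>n\<ge>1. u D (n + T) = u D n" "u D T = 2 * u D 0 - omega_trace D"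
proof -
  let ?A = "{st. qvalid st \<and> qreduced st}"
  have "?A \<subseteq> {1..int D} \<times> {1..2 * int D}" using qreduced_bounds by force
  then have "finite ?A" by (rule finite_subset) simp
  moreover have "qstep ` ?A \<subseteq> ?A" using qvalid_qstep qstep_reduced by auto
  ultimately obtain T where "T > 0" and T: "(qstep ^^ T) qstart = qstart"
    using funpow_returns_if_inj_on_finite[OF _ _ qstep_inj_on] qvalid_qstart qreduced_qstart by blast
  have per: "cf (qval qstart) (n + T) = cf (qval qstart) n" for n
  proof -
    have "(qstep ^^ (n + T)) qstart = (qstep ^^ n) qstart" by (simp add: funpow_add T)
    then show ?thesis using qstep_iterate by (simp add: cf_def) metis
  qed
  show ?thesis
  proof
    show "\<forall>n\<ge>1. u D (n + T) = u D n" using per u_eq_cf_qstart by simp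
    show "u D T = 2 * u D 0 - omega_trace D"
      using per[of 0] u_eq_cf_qstart[of T] \<open>T > 0\<close> cf_qstart_0 by simp
  qed fact
qed

lemma
  shows period_pos: "period D > 0"
    and u_add_period: "\<forall>n\<ge>1. u D (n + period D) = u D n"
    and u_period: "u D (period D) = 2 * u D 0 - omega_trace D"
proof -
  obtain T where T: "T > 0" "\<forall>n\<ge>1. u D (n + T) = u D n" "u D T = 2 * u D 0 - omega_trace D"
    using u_purely_periodic by blast
  note least = least_period_dvd[OF T(1,2), folded period_def]
  show "period D > 0" "\<forall>n\<ge>1. u D (n + period D) = u D n" using least(1,2) .
  from least(3) obtain q where q: "T = period D * q" by (auto elim: dvdE)
  with T(1) have "T = period D + (q - 1) * period D" by (cases q) simp_all
  then have "u D T = u D (period D)"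
    using periodic_add_mult[OF least(2), of "period D" "q - 1"] least(1) by simp
  with T(3) show "u D (period D) = 2 * u D 0 - omega_trace D" by simp
qed

lemma partial_quotient_bound_odd_period:
  assumes univ: "universal_diag_form D m a" and "odd (period D)" "n \<ge> 1"
  shows "u D n + 1 \<le> 2 * int m"
proof (cases "odd n")
  case True
  then have "n = Suc (n - 1)" "even (n - 1)" using \<open>n \<ge> 1\<close> by auto
  then show ?thesis using odd_partial_quotient_bound[OF univ] by metis
next
  case False
  with \<open>odd (period D)\<close> have "n + period D = Suc (n + period D - 1)" "even (n + period D - 1)"
    by auto
  then have "u D (n + period D) + 1 \<le> 2 * int m" using odd_partial_quotient_bound[OF univ] by metis
  with u_add_period \<open>n \<ge> 1\<close> show ?thesis by simp
qed

lemma M_le_even_period: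
  assumes univ: "universal_diag_form D m a" and "even (period D)"
  shows "M D \<le> int (period D) * int m"
proof -
  have "M D = (\<Sum>j<period D div 2. u D (Suc (2 * j)))"
    using \<open>even (period D)\<close> by (simp add: M_def Let_def)
  also have "\<dots> \<le> (\<Sum>j<period D div 2. 2 * int m)"
  proof (intro sum_mono)
    fix j
    show "u D (Suc (2 * j)) \<le> 2 * int m" using odd_partial_quotient_bound[OF univ, of "2 * j"] by simp
  qed
  also have "\<dots> = int (2 * (period D div 2)) * int m" by simp
  also have "2 * (period D div 2) = period D" using \<open>even (period D)\<close> by simp
  finally show ?thesis .
qed

lemma M_le_odd_period:
  assumes univ: "universal_diag_form D m a" and "odd (period D)"
  shows "M D \<le> 2 * int (period D) * int m"
proof -
  have "{1..period D} = insert (period D) {1..<period D}" using period_pos by auto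
  then have "M D = (\<Sum>i\<in>{1..period D}. u D i)"
    using \<open>odd (period D)\<close> u_period by (simp add: M_def Let_def omega_trace_def)
  also have "\<dots> \<le> (\<Sum>i\<in>{1..period D}. 2 * int m)"
    using partial_quotient_bound_odd_period[OF univ \<open>odd (period D)\<close>] by (intro sum_mono) fastforce
  also have "\<dots> = 2 * int (period D) * int m" by simp
  finally show ?thesis .
qed

end

theorem theorem12:
  fixes D m :: nat and a :: "nat \<Rightarrow> real"
  assumes "D > 1" and "squarefree D"
    and "universal_diag_form D m a"
  shows "(even (period D) \<longrightarrow> real m \<ge> real_of_int (M D) / real (period D)) \<and>
         (odd (period D) \<longrightarrow> real m \<ge> real_of_int (M D) / (2 * real (period D)))"
proof -
  interpret real_quadratic_field D using assms(1,2) by unfold_locales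
  have s: "real (period D) > 0" using period_pos by simp
  show ?thesis
  proof (intro conjI impI)
    assume "even (period D)"
    have "real_of_int (M D) \<le> real_of_int (int (period D) * int m)"
      using M_le_even_period[OF assms(3) \<open>even (period D)\<close>] by (simp only: of_int_le_iff)
    then show "real m \<ge> real_of_int (M D) / real (period D)"
      using s by (simp add: divide_le_eq mult.commute)
  next
    assume "odd (period D)"
    have "real_of_int (M D) \<le> real_of_int (2 * int (period D) * int m)"
      using M_le_odd_period[OF assms(3) \<open>odd (period D)\<close>] by (simp only: of_int_le_iff)
    then show "real m \<ge> real_of_int (M D) / (2 * real (period D))"
      using s by (simp add: divide_le_eq mult.commute)
  qed
qed

end
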